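(* Let $\mathcal{C}$ be the MILP consisting of constraints (C1)–(C6) below for a binary tree ensemble $\mathcal{E}$, a set $F\subseteq\mathcal{F}$ of sensitive features and a gap $g$. Then the set of feasible solutions of $\mathcal{C}$ equals the set of feasible solutions of the MILP obtained by adding to $\mathcal{C}$ the constraints (UnAff) $l^{(1)}_n = l^{(2)}_n$ for every unaffected leaf $n\in\mathcal{U}$, and (Aff-bin) $\sum_{n\in\mathcal{A}\setminus\mathcal{U}}\left(l^{(1)}_n\, n.val - l^{(2)}_n\, n.val\right)\ge 2\delta$.
   Context: A decision tree is either a leaf $n$ with real value $n.val$ or an internal node with guard $X_f<\tau$ (feature $f$, constant $\tau$) and children $n.yes$ (taken when $x_f<\tau$) and $n.no$. A binary tree ensemble $\mathcal{E}$ is a finite set of such trees over feature set $\mathcal{F}$. For each feature $f$, let $\tau_{f1}<\tau_{f2}<\dots<\tau_{fK_f}$ be the distinct thresholds of guards on $f$ in the ensemble. Let $\mathcal{A}$ be the set of all leaves of all trees. For each internal node $n$, $TSet(n)$ is the set of leaves of the subtree rooted at $n.yes$ and $FSet(n)$ those of the subtree rooted at $n.no$. Let $g$ with $0\le g<0.5$ and $\delta=\mathrm{Sigmoid}^{-1}(0.5+g)$, where $\mathrm{Sigmoid}(z)=1/(1+e^{-z})$. Variables: for each copy $c\in\{1,2\}$, binary variables $p^{(c)}_{fk}\in\{0,1\}$ for every feature $f$ and $k\in\{1,\dots,K_f\}$ (intended meaning: $X_f<\tau_{fk}$), and continuous variables $0\le l^{(c)}_n\le 1$ for every leaf $n\in\mathcal{A}$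 (intended meaning: leaf $n$ is reached). Constraints of $\mathcal{C}$ (for each $c\in\{1,2\}$ where applicable): (C1) $p^{(c)}_{f1}\le p^{(c)}_{f2}\le\dots\le p^{(c)}_{fK_f}$ for each feature $f$; (C2) for each tree, the sum of $l^{(c)}_n$ over its leaves equals $1$; (C3) for each root node with guard $X_f<\tau_{fk}$: $1-\sum_{n\in FSet}l^{(c)}_n = p^{(c)}_{fk}=\sum_{n\in TSet}l^{(c)}_n$; (C4) for each non-root internal node with guard $X_f<\tau_{fk}$: $1-\sum_{n\in FSet}l^{(c)}_n \ge p^{(c)}_{fk}\ge\sum_{n\in TSet}l^{(c)}_n$; (C5) $p^{(1)}_{fk}=p^{(2)}_{fk}$ for every feature $f\notin F$ and every $k$; (C6) $\sum_{n\in\mathcal{A}}l^{(1)}_n\, n.val\ge\delta$ and $\sum_{n\in\mathcal{A}}l^{(2)}_n\, n.val\le-\delta$. A leaf is unaffected if no guard on the path from its tree's root to it involves a feature of $F$; $\mathcal{U}$ denotes the set of unaffected leaves. *)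

theory Defs
  imports Complex_Main
begin

text \<open>Decision trees: a leaf with a real value, or an internal node with guard
  X_f < tau (feature f, threshold tau), yes-child and no-child.\<close>
datatype dtree = Leaf real | Node nat real dtree dtree

text \<open>Nodes are identified by their path from the root (True = yes-branch).\<close>
fun leaves :: "dtree \<Rightarrow> bool list set" where
  "leaves (Leaf v) = {[]}"
| "leaves (Node f t y n) = (Cons True) ` leaves y \<union> (Cons False) ` leaves n"

fun guards :: "dtree \<Rightarrow> (bool list \<times> nat \<times> real) set" where
  "guards (Leaf v) = {}"
| "guards (Node f t y n) = {([], f, t)}
     \<union> (\<lambda>(q, g). (True # q, g)) ` guards y
     \<union> (\<lambda>(q, g). (False # q, g)) ` guards n"

fun leafval :: "dtree \<Rightarrow> bool list \<Rightarrow> real" where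
  "leafval (Leaf v) [] = v"
| "leafval (Node f t y n) (b # r) = (if b then leafval y r else leafval n r)"
| "leafval _ _ = 0"

definition TSet :: "dtree \<Rightarrow> bool list \<Rightarrow> bool list set" where
  "TSet t q = {r \<in> leaves t. \<exists>r'. r = q @ True # r'}"

definition FSet :: "dtree \<Rightarrow> bool list \<Rightarrow> bool list set" where
  "FSet t q = {r \<in> leaves t. \<exists>r'. r = q @ False # r'}"

text \<open>An ensemble is a finite family of trees, given as a list; a leaf of the ensemble
  is identified by (tree index, path).\<close>
definition allLeaves :: "dtree list \<Rightarrow> (nat \<times> bool list) set" where
  "allLeaves E = {(i, r). i < length E \<and> r \<in> leaves (E ! i)}"

definition thr :: "dtree list \<Rightarrow> nat \<Rightarrow> real set" where
  "thr E f = {\<tau>. \<exists>i < length E. \<exists>q. (q, f, \<tau>) \<in> guards (E ! i)}"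

definition val :: "dtree list \<Rightarrow> nat \<times> bool list \<Rightarrow> real" where
  "val E n = leafval (E ! fst n) (snd n)"

definition sigmoid :: "real \<Rightarrow> real" where
  "sigmoid z = 1 / (1 + exp (- z))"

definition delta :: "real \<Rightarrow> real" where
  "delta g = (THE z. sigmoid z = 1/2 + g)"

text \<open>Constraints (C1)-(C4) for one copy: p f tau is the variable p_{fk} with
  tau = tau_{fk}; l n is l_n for a leaf n.\<close>
definition copy_ok :: "dtree list \<Rightarrow> (nat \<Rightarrow> real \<Rightarrow> real) \<Rightarrow> (nat \<times> bool list \<Rightarrow> real) \<Rightarrow> bool" where
  "copy_ok E p l \<longleftrightarrow>
     (\<forall>f. \<forall>\<tau>\<in>thr E f. p f \<tau> \<in> {0, 1}) \<and>
     (\<forall>n\<in>allLeaves E. 0 \<le> l n \<and> l n \<le> 1) \<and>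
     (\<forall>f. \<forall>\<tau>\<in>thr E f. \<forall>\<tau>'\<in>thr E f. \<tau> \<le> \<tau>' \<longrightarrow> p f \<tau> \<le> p f \<tau>') \<and>
     (\<forall>i < length E. (\<Sum>r\<in>leaves (E ! i). l (i, r)) = 1) \<and>
     (\<forall>i < length E. \<forall>q f \<tau>. (q, f, \<tau>) \<in> guards (E ! i) \<longrightarrow>
        (if q = []
         then 1 - (\<Sum>r\<in>FSet (E ! i) q. l (i, r)) = p f \<tau> \<and> p f \<tau> = (\<Sum>r\<in>TSet (E ! i) q. l (i, r))
         else 1 - (\<Sum>r\<in>FSet (E ! i) q. l (i, r)) \<ge> p f \<tau> \<and> p f \<tau> \<ge> (\<Sum>r\<in>TSet (E ! i) q. l (i, r))))"

text \<open>The MILP C: (C1)-(C4) for both copies, (C5), (C6).\<close>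
definition milpC :: "dtree list \<Rightarrow> nat set \<Rightarrow> real \<Rightarrow>
    (nat \<Rightarrow> real \<Rightarrow> real) \<Rightarrow> (nat \<Rightarrow> real \<Rightarrow> real) \<Rightarrow>
    (nat \<times> bool list \<Rightarrow> real) \<Rightarrow> (nat \<times> bool list \<Rightarrow> real) \<Rightarrow> bool" where
  "milpC E F g p1 p2 l1 l2 \<longleftrightarrow>
     copy_ok E p1 l1 \<and> copy_ok E p2 l2 \<and>
     (\<forall>f. f \<notin> F \<longrightarrow> (\<forall>\<tau>\<in>thr E f. p1 f \<tau> = p2 f \<tau>)) \<and>
     (\<Sum>n\<in>allLeaves E. l1 n * val E n) \<ge> delta g \<and>
     (\<Sum>n\<in>allLeaves E. l2 n * val E n) \<le> - delta g"

definition unaffected :: "dtree list \<Rightarrow> nat set \<Rightarrow> nat \<times> bool list \<Rightarrow> bool" where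
  "unaffected E F n \<longleftrightarrow>
     (\<forall>q f \<tau>. (q, f, \<tau>) \<in> guards (E ! fst n) \<and> (\<exists>b r'. snd n = q @ b # r') \<longrightarrow> f \<notin> F)"

definition unaffLeaves :: "dtree list \<Rightarrow> nat set \<Rightarrow> (nat \<times> bool list) set" where
  "unaffLeaves E F = {n \<in> allLeaves E. unaffected E F n}"

end

theory Submission
  imports Defs
begin

text \<open>The binary variables of a copy fix the
  outcome of every guard, and (C2)-(C4) force the leaf variables of each tree to be the
  indicator of the unique leaf reached under these outcomes. On the path to an unaffected
  leaf only features outside \<open>F\<close> are tested, where both copies agree by (C5); so both copies
  reach it or neither does, which is (UnAff). Then the unaffected leaves cancel in the
  difference of the two inequalities (C6), which is (Aff-bin).\<close>

lemma finite_leaves: "finite (leaves t)"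
  by (induction t) auto

lemma finite_allLeaves: "finite (allLeaves E)"
proof -
  have "allLeaves E = (\<Union>i<length E. Pair i ` leaves (E ! i))"
    unfolding allLeaves_def by auto
  then show ?thesis
    by (simp add: finite_leaves)
qed

lemma guards_Node_Cons:
  "(q, h) \<in> guards (if b then y else n) \<Longrightarrow> (b # q, h) \<in> guards (Node f \<tau> y n)"
  by (cases b) (auto intro: image_eqI[where x = "(q, h)"])

lemma leaves_split_at_guard:
  assumes "r \<in> leaves t" and "r' \<in> leaves t" and "r \<noteq> r'"
  shows "\<exists>q f \<tau> b s s'. (q, f, \<tau>) \<in> guards t \<and> r = q @ b # s \<and> r' = q @ (\<not> b) # s'"
  using assms
proof (induction t arbitrary: r r')
  case (Node f \<tau> y n)
  then obtain b s b' s' where r: "r = b # s" and r': "r' = b' # s'"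
    by auto
  show ?case
  proof (cases "b = b'")
    case False
    then have "r' = [] @ (\<not> b) # s'"
      using r' by simp
    then show ?thesis
      using r by fastforce
  next
    case True
    then have "s \<noteq> s'" and "s \<in> leaves (if b then y else n)" and "s' \<in> leaves (if b then y else n)"
      using Node.prems r r' by auto
    then obtain q f' \<tau>' c u u' where
      "(q, f', \<tau>') \<in> guards (if b then y else n)" "s = q @ c # u" "s' = q @ (\<not> c) # u'"
      using Node.IH by (cases b) (simp_all, blast+)
    then have "(b # q, f', \<tau>') \<in> guards (Node f \<tau> y n)"
      and "r = (b # q) @ c # u" and "r' = (b # q) @ (\<not> c) # u'"
      using r r' True guards_Node_Cons by auto
    then show ?thesis
      by blast
  qed
qed simp

text \<open>The leaf of \<open>t\<close> reached by an input on which guard \<open>X\<^sub>f < \<tau>\<close> holds iff \<open>p f \<tau> = 1\<close>.\<close>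
definition reaches :: "(nat \<Rightarrow> real \<Rightarrow> real) \<Rightarrow> dtree \<Rightarrow> bool list \<Rightarrow> bool" where
  "reaches p t r \<longleftrightarrow> (\<forall>q f \<tau> b s. (q, f, \<tau>) \<in> guards t \<and> r = q @ b # s \<longrightarrow> (b \<longleftrightarrow> p f \<tau> = 1))"

lemma reachesD:
  assumes "reaches p t r" and "(q, f, \<tau>) \<in> guards t" and "r = q @ b # s"
  shows "b \<longleftrightarrow> p f \<tau> = 1"
  using assms unfolding reaches_def by (elim allE[of _ q] allE[of _ f] allE[of _ \<tau>] allE[of _ b] allE[of _ s]) blast

lemma reaches_unique:
  assumes "r \<in> leaves t" and "r' \<in> leaves t" and "reaches p t r" and "reaches p t r'"
  shows "r = r'"
proof (rule ccontr)
  assume "r \<noteq> r'"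
  then obtain q f \<tau> b s s' where "(q, f, \<tau>) \<in> guards t" "r = q @ b # s" "r' = q @ (\<not> b) # s'"
    using leaves_split_at_guard assms(1,2) by blast
  then have "b \<longleftrightarrow> p f \<tau> = 1" and "\<not> b \<longleftrightarrow> p f \<tau> = 1"
    using reachesD assms(3,4) by blast+
  then show False
    by blast
qed

lemma reaches_cong:
  assumes "\<And>q f \<tau> b s. (q, f, \<tau>) \<in> guards t \<Longrightarrow> r = q @ b # s \<Longrightarrow> p f \<tau> = p' f \<tau>"
  shows "reaches p t r \<longleftrightarrow> reaches p' t r"
  using assms unfolding reaches_def by metis

lemma leaf_weight_eq_indicator:
  assumes nonneg: "\<And>r. r \<in> leaves t \<Longrightarrow> 0 \<le> L r"
    and sum_one: "(\<Sum>r\<in>leaves t. L r) = 1"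
    and unreached: "\<And>r. r \<in> leaves t \<Longrightarrow> \<not> reaches p t r \<Longrightarrow> L r = 0"
    and r: "r \<in> leaves t"
  shows "L r = (if reaches p t r then 1 else 0)"
proof (cases "reaches p t r")
  case True
  have "L r' = 0" if "r' \<in> leaves t - {r}" for r'
    using that unreached reaches_unique[OF r _ True] by blast
  then have "(\<Sum>r'\<in>leaves t. L r') = L r"
    using sum.remove[OF finite_leaves r, of L] by simp
  then show ?thesis
    using sum_one True by simp
qed (use unreached r in simp)

lemma copy_ok_leaf_nonneg:
  assumes "copy_ok E p l" and "i < length E" and "r \<in> leaves (E ! i)"
  shows "0 \<le> l (i, r)"
proof -
  have "(i, r) \<in> allLeaves E"
    using assms(2,3) by (simp add: allLeaves_def)
  then show ?thesis
    using assms(1) unfolding copy_ok_def by blast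
qed

lemma copy_ok_tree_sum:
  assumes "copy_ok E p l" and "i < length E"
  shows "(\<Sum>r\<in>leaves (E ! i). l (i, r)) = 1"
  using assms unfolding copy_ok_def by (elim conjE) blast

lemma copy_ok_guard:
  assumes ok: "copy_ok E p l" and i: "i < length E" and guard: "(q, f, \<tau>) \<in> guards (E ! i)"
  shows "p f \<tau> \<in> {0, 1}"
    and "(\<Sum>r\<in>FSet (E ! i) q. l (i, r)) \<le> 1 - p f \<tau>"
    and "(\<Sum>r\<in>TSet (E ! i) q. l (i, r)) \<le> p f \<tau>"
proof -
  have "\<tau> \<in> thr E f"
    using i guard unfolding thr_def by blast
  then show "p f \<tau> \<in> {0, 1}"
    using ok unfolding copy_ok_def by blast
  have "if q = []
      then 1 - (\<Sum>r\<in>FSet (E ! i) q. l (i, r)) = p f \<tau> \<and> p f \<tau> = (\<Sum>r\<in>TSet (E ! i) q. l (i, r))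
      else 1 - (\<Sum>r\<in>FSet (E ! i) q. l (i, r)) \<ge> p f \<tau> \<and> p f \<tau> \<ge> (\<Sum>r\<in>TSet (E ! i) q. l (i, r))"
    using ok i guard unfolding copy_ok_def by blast
  then show "(\<Sum>r\<in>FSet (E ! i) q. l (i, r)) \<le> 1 - p f \<tau>"
    and "(\<Sum>r\<in>TSet (E ! i) q. l (i, r)) \<le> p f \<tau>"
    by (auto split: if_splits)
qed

lemma copy_ok_unreached_leaf:
  assumes ok: "copy_ok E p l" and i: "i < length E" and r: "r \<in> leaves (E ! i)"
    and unreached: "\<not> reaches p (E ! i) r"
  shows "l (i, r) = 0"
proof -
  obtain q f \<tau> b s where guard: "(q, f, \<tau>) \<in> guards (E ! i)" and path: "r = q @ b # s"
    and wrong: "b \<longleftrightarrow> p f \<tau> \<noteq> 1"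
    using unreached unfolding reaches_def by blast
  have nonneg: "\<And>r. r \<in> leaves (E ! i) \<Longrightarrow> 0 \<le> l (i, r)"
    using copy_ok_leaf_nonneg[OF ok i] .
  note bounds = copy_ok_guard[OF ok i guard]
  have "l (i, r) \<le> (if b then p f \<tau> else 1 - p f \<tau>)"
  proof (cases b)
    case True
    then have "r \<in> TSet (E ! i) q"
      using r path unfolding TSet_def by blast
    then have "l (i, r) \<le> (\<Sum>r\<in>TSet (E ! i) q. l (i, r))"
      by (rule member_le_sum) (use nonneg finite_leaves in \<open>auto simp: TSet_def\<close>)
    then show ?thesis
      using bounds True by simp
  next
    case False
    then have "r \<in> FSet (E ! i) q"
      using r path unfolding FSet_def by blast
    then have "l (i, r) \<le> (\<Sum>r\<in>FSet (E ! i) q. l (i, r))"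
      by (rule member_le_sum) (use nonneg finite_leaves in \<open>auto simp: FSet_def\<close>)
    then show ?thesis
      using bounds False by simp
  qed
  also have "\<dots> = 0"
    using bounds(1) wrong by auto
  finally show ?thesis
    using nonneg[OF r] by simp
qed

lemma copy_ok_leaf_indicator:
  assumes "copy_ok E p l" and "i < length E" and "r \<in> leaves (E ! i)"
  shows "l (i, r) = (if reaches p (E ! i) r then 1 else 0)"
  using leaf_weight_eq_indicator[where L = "\<lambda>r. l (i, r)"] assms
    copy_ok_leaf_nonneg copy_ok_tree_sum copy_ok_unreached_leaf
  by blast

lemma milpC_unaffected_leaf:
  assumes C: "milpC E F g p1 p2 l1 l2" and n: "n \<in> unaffLeaves E F"
  shows "l1 n = l2 n"
proof -
  obtain i r where n_eq: "n = (i, r)" and i: "i < length E" and r: "r \<in> leaves (E ! i)"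
    and unaff: "unaffected E F (i, r)"
    using n unfolding unaffLeaves_def allLeaves_def by auto
  have "p1 f \<tau> = p2 f \<tau>" if "(q, f, \<tau>) \<in> guards (E ! i)" and "r = q @ b # s" for q f \<tau> b s
  proof -
    have "f \<notin> F"
      using unaff that unfolding unaffected_def by auto
    moreover have "\<tau> \<in> thr E f"
      using i that(1) unfolding thr_def by blast
    ultimately show ?thesis
      using C unfolding milpC_def by blast
  qed
  then have same_leaf: "reaches p1 (E ! i) r \<longleftrightarrow> reaches p2 (E ! i) r"
    by (rule reaches_cong)
  have "copy_ok E p1 l1" and "copy_ok E p2 l2"
    using C unfolding milpC_def by auto
  then have "l1 (i, r) = (if reaches p1 (E ! i) r then 1 else 0)"
    and "l2 (i, r) = (if reaches p2 (E ! i) r then 1 else 0)"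
    using copy_ok_leaf_indicator i r by blast+
  then show ?thesis
    unfolding n_eq same_leaf by simp
qed

lemma milpC_affected_gap:
  assumes C: "milpC E F g p1 p2 l1 l2"
  shows "(\<Sum>n\<in>allLeaves E - unaffLeaves E F. l1 n * val E n - l2 n * val E n) \<ge> 2 * delta g"
proof -
  have "(\<Sum>n\<in>allLeaves E - unaffLeaves E F. l1 n * val E n - l2 n * val E n)
      = (\<Sum>n\<in>allLeaves E. l1 n * val E n - l2 n * val E n)"
    by (rule sum.mono_neutral_left)
      (use finite_allLeaves milpC_unaffected_leaf[OF C] in auto)
  also have "\<dots> = (\<Sum>n\<in>allLeaves E. l1 n * val E n) - (\<Sum>n\<in>allLeaves E. l2 n * val E n)"
    by (rule sum_subtractf)
  finally show ?thesis
    using C unfolding milpC_def by linarith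
qed

theorem theorem3:
  fixes E :: "dtree list" and Feats F :: "nat set" and g :: real
  assumes "\<forall>i < length E. \<forall>q f \<tau>. (q, f, \<tau>) \<in> guards (E ! i) \<longrightarrow> f \<in> Feats"
    and "F \<subseteq> Feats"
    and "0 \<le> g" and "g < 1/2"
  shows "{(p1, p2, l1, l2). milpC E F g p1 p2 l1 l2}
       = {(p1, p2, l1, l2). milpC E F g p1 p2 l1 l2
            \<and> (\<forall>n\<in>unaffLeaves E F. l1 n = l2 n)
            \<and> (\<Sum>n\<in>allLeaves E - unaffLeaves E F. l1 n * val E n - l2 n * val E n) \<ge> 2 * delta g}"
  by (auto intro: milpC_unaffected_leaf milpC_affected_gap)

end
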